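(* Let $\beta>0$, $\rho>0$, $\xi>0$, let $f,c_i$ ($i\in\mathcal I=\{1,\dots,m\}$) be continuously differentiable, and let $z_k=(x_k,u_k)$, $H_k$ a symmetric $n\times n$ matrix, and $d_k^c\in\mathbb{R}^{n+m}$ given, with $d_k^c=0$ whenever $r_k=0$. Let $d_k=(d_{xk},d_{uk})$ be an optimal solution of $$\min_{d}\ \hat q_k(d)=\rho\nabla f_k^Td_x+\sum_{i}\frac{\rho\beta}{y_{ki}+\lambda_{ki}}(\nabla c_{ki}^Td_x+\rho d_{ui})+\tfrac12d_x^TH_kd_x+\tfrac12\sum_i\frac{\rho\beta}{(y_{ki}+\lambda_{ki})^2}(\nabla c_{ki}^Td_x+\rho d_{ui})^2\quad\text{s.t.}\quad R_k^Td=R_k^Td_k^c.$$ Let $\Phi_\xi'(z_k;d_k)$ denote the directional derivative of $z\mapsto\Phi_\xi(z;\beta,\rho)$ at $z_k$ along $d_k$. Then: (1) $\Phi'_\xi(z_k;d_k)\le\xi\Big(\rho\nabla f_k^Td_{xk}+\sum_i\frac{\rho\beta}{y_{ki}+\lambda_{ki}}(\nabla c_{ki}^Td_{xk}+\rho d_{uki})\Big)+\|r_k+R_k^Td_k\|-\|r_k\|$. (2) If $r_k=0$, then $\Phi'_\xi(z_k;d_k)\le-\tfrac12\xi\,d_k^TQ_kd_k$.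
   Context: Notation: $y_i(x,u;\beta,\rho)=\tfrac12[\sqrt{(c_i(x)+\rho u_i)^2+4\rho\beta}-(c_i(x)+\rho u_i)]$, $\lambda_i(x,u;\beta,\rho)=\tfrac12[\sqrt{(c_i(x)+\rho u_i)^2+4\rho\beta}+(c_i(x)+\rho u_i)]$; $y_{ki},\lambda_{ki}$ are their values at $(x_k,u_k)$; $c_{ki}=c_i(x_k)$, $\nabla c_{ki}=\nabla c_i(x_k)$, $\nabla f_k=\nabla f(x_k)$. The merit function is $\Phi_\xi(x,u;\beta,\rho)=\xi\rho f(x)-\xi\rho\beta\sum_i\ln y_i(x,u;\beta,\rho)+\|c(x)+y(x,u;\beta,\rho)\|$ (Euclidean norm). $r_k=c(x_k)+y(x_k,u_k;\beta,\rho)\in\mathbb{R}^m$. $R_k$ is the $(n+m)\times m$ matrix whose $i$th column is $\big(\tfrac{\lambda_{ki}}{y_{ki}+\lambda_{ki}}\nabla c_{ki};\,-\rho\tfrac{y_{ki}}{y_{ki}+\lambda_{ki}}e_i\big)$, $e_i$ the $i$th unit vector in $\mathbb{R}^m$. $Q_k$ is the symmetric matrix such that $d^TQ_kd=d_x^TH_kd_x+\sum_i\frac{\rho\beta}{(y_{ki}+\lambda_{ki})^2}(\nabla c_{ki}^Td_x+\rho d_{ui})^2$, namely $Q_k=\begin{pmatrix}H_k+\sum_i w_{ki}\nabla c_{ki}\nabla c_{ki}^T & G_k\\ G_k^T&\mathrm{diag}(\rho^2w_{ki})\end{pmatrix}$ with $w_{ki}=\rho\beta/(y_{ki}+\lambda_{ki})^2$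 and $G_k$ having columns $\rho w_{ki}\nabla c_{ki}$. *)

theory Defs
  imports "HOL-Analysis.Analysis"
begin

definition yv :: "real \<Rightarrow> real \<Rightarrow> real \<Rightarrow> real \<Rightarrow> real" where
  "yv \<beta> \<rho> ci ui = (sqrt ((ci + \<rho> * ui)^2 + 4 * \<rho> * \<beta>) - (ci + \<rho> * ui)) / 2"

definition lv :: "real \<Rightarrow> real \<Rightarrow> real \<Rightarrow> real \<Rightarrow> real" where
  "lv \<beta> \<rho> ci ui = (sqrt ((ci + \<rho> * ui)^2 + 4 * \<rho> * \<beta>) + (ci + \<rho> * ui)) / 2"

definition merit :: "real \<Rightarrow> real \<Rightarrow> real \<Rightarrow> (real^'n \<Rightarrow> real) \<Rightarrow> ('m::finite \<Rightarrow> real^'n \<Rightarrow> real)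
    \<Rightarrow> (real^'n) \<times> (real^'m) \<Rightarrow> real" where
  "merit \<xi> \<beta> \<rho> f c z = (case z of (x, u) \<Rightarrow>
      \<xi> * \<rho> * f x - \<xi> * \<rho> * \<beta> * (\<Sum>i\<in>UNIV. ln (yv \<beta> \<rho> (c i x) (u $ i)))
      + norm (\<chi> i. c i x + yv \<beta> \<rho> (c i x) (u $ i)))"

definition has_dir_deriv :: "('a::real_normed_vector \<Rightarrow> real) \<Rightarrow> 'a \<Rightarrow> 'a \<Rightarrow> real \<Rightarrow> bool" where
  "has_dir_deriv F z d D \<longleftrightarrow> ((\<lambda>t. (F (z + t *\<^sub>R d) - F z) / t) \<longlongrightarrow> D) (at_right 0)"

text \<open>Data at the iterate: ck i = c_i(x_k), gck i = grad c_i(x_k), gfk = grad f(x_k).\<close>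

definition rvec :: "real \<Rightarrow> real \<Rightarrow> ('m::finite \<Rightarrow> real) \<Rightarrow> real^'m \<Rightarrow> real^'m" where
  "rvec \<beta> \<rho> ck uk = (\<chi> i. ck i + yv \<beta> \<rho> (ck i) (uk $ i))"

definition RTd :: "real \<Rightarrow> real \<Rightarrow> ('m::finite \<Rightarrow> real) \<Rightarrow> ('m \<Rightarrow> real^'n) \<Rightarrow> real^'m
    \<Rightarrow> (real^'n) \<times> (real^'m) \<Rightarrow> real^'m" where
  "RTd \<beta> \<rho> ck gck uk d = (\<chi> i.
      let y = yv \<beta> \<rho> (ck i) (uk $ i); l = lv \<beta> \<rho> (ck i) (uk $ i) in
      (l / (y + l)) * (gck i \<bullet> fst d) - \<rho> * (y / (y + l)) * (snd d $ i))"

definition linq :: "real \<Rightarrow> real \<Rightarrow> real^'n \<Rightarrow> ('m::finite \<Rightarrow> real) \<Rightarrow> ('m \<Rightarrow> real^'n) \<Rightarrow> real^'m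
    \<Rightarrow> (real^'n) \<times> (real^'m) \<Rightarrow> real" where
  "linq \<beta> \<rho> gfk ck gck uk d = \<rho> * (gfk \<bullet> fst d) +
     (\<Sum>i\<in>UNIV. \<rho> * \<beta> / (yv \<beta> \<rho> (ck i) (uk $ i) + lv \<beta> \<rho> (ck i) (uk $ i))
        * (gck i \<bullet> fst d + \<rho> * snd d $ i))"

definition quadQ :: "real \<Rightarrow> real \<Rightarrow> real^'n^'n \<Rightarrow> ('m::finite \<Rightarrow> real) \<Rightarrow> ('m \<Rightarrow> real^'n) \<Rightarrow> real^'m
    \<Rightarrow> (real^'n) \<times> (real^'m) \<Rightarrow> real" where
  "quadQ \<beta> \<rho> H ck gck uk d = fst d \<bullet> (H *v fst d) +
     (\<Sum>i\<in>UNIV. \<rho> * \<beta> / (yv \<beta> \<rho> (ck i) (uk $ i) + lv \<beta> \<rho> (ck i) (uk $ i))^2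
        * (gck i \<bullet> fst d + \<rho> * snd d $ i)^2)"

definition qhat :: "real \<Rightarrow> real \<Rightarrow> real^'n \<Rightarrow> real^'n^'n \<Rightarrow> ('m::finite \<Rightarrow> real) \<Rightarrow> ('m \<Rightarrow> real^'n)
    \<Rightarrow> real^'m \<Rightarrow> (real^'n) \<times> (real^'m) \<Rightarrow> real" where
  "qhat \<beta> \<rho> gfk H ck gck uk d = linq \<beta> \<rho> gfk ck gck uk d + quadQ \<beta> \<rho> H ck gck uk d / 2"

end

theory Submission
  imports Defs
begin

text \<open>
  Along the ray \<open>z\<^sub>k + t d\<^sub>k\<close> the merit function splits into a smooth barrier part and the
  norm of the residual curve \<open>c(x) + y(x,u)\<close>. Since \<open>y\<^sub>i\<close> depends only on
  \<open>s\<^sub>i = c\<^sub>i + \<rho> u\<^sub>i\<close>, with \<open>dy\<^sub>i/ds\<^sub>i = - y\<^sub>i / (y\<^sub>i + \<lambda>\<^sub>i)\<close>, the barrier part has derivative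
  \<open>\<xi>\<close> times the linear part of \<open>q\<^sub>k\<close>, and the residual curve has velocity \<open>R\<^sub>k\<^sup>T d\<^sub>k\<close>.
  The norm contributes its one-sided directional derivative at \<open>r\<^sub>k\<close>, which by Cauchy-Schwarz is
  at most \<open>\<parallel>r\<^sub>k + R\<^sub>k\<^sup>T d\<^sub>k\<parallel> - \<parallel>r\<^sub>k\<parallel>\<close>. If \<open>r\<^sub>k = 0\<close> then \<open>d\<^sub>k\<^sup>c = 0\<close>, so \<open>d = 0\<close> is feasible:
  hence \<open>R\<^sub>k\<^sup>T d\<^sub>k = 0\<close> and \<open>q\<^sub>k(d\<^sub>k) \<le> q\<^sub>k(0) = 0\<close>, which is part (2).
\<close>

lemma tendsto_right_quotient_of_vector_derivative:
  fixes w :: "real \<Rightarrow> 'a::real_normed_vector"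
  assumes "(w has_vector_derivative v) (at 0)"
  shows "((\<lambda>t. (w t - w 0) /\<^sub>R t) \<longlongrightarrow> v) (at_right 0)"
proof -
  have "(w has_derivative (\<lambda>t. t *\<^sub>R v)) (at 0 within {0<..})"
    using assms has_derivative_at_withinI unfolding has_vector_derivative_def by blast
  then have "((\<lambda>t. ((w t - w 0) - t *\<^sub>R v) /\<^sub>R norm t) \<longlongrightarrow> 0) (at_right 0)"
    unfolding has_derivative_at_within by simp
  moreover have "\<forall>\<^sub>F t in at_right 0. ((w t - w 0) - t *\<^sub>R v) /\<^sub>R norm t = (w t - w 0) /\<^sub>R t - v"
    by (rule eventually_at_rightI[of 0 1]) (simp_all add: scaleR_diff_right)
  ultimately have "((\<lambda>t. (w t - w 0) /\<^sub>R t - v) \<longlongrightarrow> 0) (at_right 0)"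
    by (rule Lim_transform_eventually)
  then show ?thesis by (simp add: LIM_zero_iff)
qed

lemma tendsto_right_quotient_of_real_derivative:
  assumes "(g has_real_derivative D) (at 0)"
  shows "((\<lambda>t. (g t - g 0) / t) \<longlongrightarrow> D) (at_right 0)"
  using tendsto_right_quotient_of_vector_derivative[of g D] assms
  by (simp add: has_real_derivative_iff_has_vector_derivative divide_inverse mult.commute)

lemma has_vector_derivative_vec_lambda:
  assumes "\<And>i. (W i has_real_derivative W' i) (at t)"
  shows "((\<lambda>s. \<chi> i. W i s) has_vector_derivative (\<chi> i. W' i)) (at t)"
proof -
  have "(W i has_derivative (\<lambda>h. h * W' i)) (at t)" for i
    using assms[of i] unfolding has_real_derivative_iff_has_vector_derivative has_vector_derivative_def
    by simp
  then have "\<forall>b\<in>Basis. ((\<lambda>s. (\<chi> i. W i s) \<bullet> b) has_derivative (\<lambda>h. (h *\<^sub>R (\<chi> i. W' i)) \<bullet> b)) (at t)"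
    by (auto simp: Basis_vec_def inner_axis)
  then show ?thesis
    unfolding has_vector_derivative_def by (rule has_derivative_componentwise_within[THEN iffD2])
qed

lemma DERIV_along_line:
  assumes "(g has_derivative (\<lambda>h. g' \<bullet> h)) (at x)"
  shows "((\<lambda>t. g (x + t *\<^sub>R d)) has_real_derivative g' \<bullet> d) (at 0)"
proof -
  have "((\<lambda>t. x + t *\<^sub>R d) has_derivative (\<lambda>t. t *\<^sub>R d)) (at 0)"
    by (auto intro!: derivative_eq_intros)
  moreover have "(g has_derivative (\<lambda>h. g' \<bullet> h)) (at (x + 0 *\<^sub>R d))"
    using assms by simp
  ultimately have "((\<lambda>t. g (x + t *\<^sub>R d)) has_derivative (\<lambda>t. t * (g' \<bullet> d))) (at 0)"
    by (auto dest: has_derivative_compose)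
  then show ?thesis
    unfolding has_real_derivative_iff_has_vector_derivative has_vector_derivative_def by simp
qed

text \<open>The norm is not differentiable at \<open>0\<close>; its one-sided derivative there along \<open>v\<close> is \<open>norm v\<close>.\<close>
definition norm_dir_deriv :: "'a::real_inner \<Rightarrow> 'a \<Rightarrow> real" where
  "norm_dir_deriv r v = (if r = 0 then norm v else v \<bullet> sgn r)"

lemma norm_dir_deriv_le: "norm_dir_deriv r v \<le> norm (r + v) - norm r"
proof (cases "r = 0")
  case False
  then have "norm r > 0" by simp
  have "norm r ^ 2 + r \<bullet> v = r \<bullet> (r + v)"
    by (simp add: inner_add_right power2_norm_eq_inner)
  also have "\<dots> \<le> norm r * norm (r + v)" by (rule norm_cauchy_schwarz)
  finally have "r \<bullet> v / norm r \<le> norm (r + v) - norm r"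
    using \<open>norm r > 0\<close> by (simp add: field_simps power2_eq_square)
  moreover have "v \<bullet> sgn r = r \<bullet> v / norm r"
    by (simp add: sgn_div_norm inner_commute divide_inverse_commute)
  ultimately show ?thesis
    using False by (simp add: norm_dir_deriv_def)
qed (simp add: norm_dir_deriv_def)

lemma tendsto_norm_right_quotient:
  fixes w :: "real \<Rightarrow> 'a::real_inner"
  assumes "(w has_vector_derivative v) (at 0)"
  shows "((\<lambda>t. (norm (w t) - norm (w 0)) / t) \<longlongrightarrow> norm_dir_deriv (w 0) v) (at_right 0)"
proof (cases "w 0 = 0")
  case True
  have "((\<lambda>t. norm ((w t - w 0) /\<^sub>R t)) \<longlongrightarrow> norm v) (at_right 0)"
    by (intro tendsto_norm tendsto_right_quotient_of_vector_derivative assms)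
  moreover have "\<forall>\<^sub>F t in at_right 0. norm ((w t - w 0) /\<^sub>R t) = (norm (w t) - norm (w 0)) / t"
    using True by (intro eventually_at_rightI[of 0 1]) (auto simp: field_simps)
  ultimately show ?thesis
    using True unfolding norm_dir_deriv_def by (simp add: Lim_transform_eventually)
next
  case False
  have "((\<lambda>t. norm (w t)) has_derivative (\<lambda>t. (t *\<^sub>R v) \<bullet> sgn (w 0))) (at 0)"
    using has_derivative_compose[OF assms[unfolded has_vector_derivative_def]
        has_derivative_norm[OF False]] .
  then have "((\<lambda>t. norm (w t)) has_real_derivative v \<bullet> sgn (w 0)) (at 0)"
    unfolding has_real_derivative_iff_has_vector_derivative has_vector_derivative_def by simp
  from tendsto_right_quotient_of_real_derivative[OF this] show ?thesis
    using False unfolding norm_dir_deriv_def by simp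
qed

lemma yv_plus_lv: "yv \<beta> \<rho> a b + lv \<beta> \<rho> a b = sqrt ((a + \<rho> * b)\<^sup>2 + 4 * \<rho> * \<beta>)"
  unfolding yv_def lv_def by (simp add: field_simps)

lemma yv_plus_lv_pos:
  assumes "\<beta> > 0" "\<rho> > 0"
  shows "yv \<beta> \<rho> a b + lv \<beta> \<rho> a b > 0"
  unfolding yv_plus_lv using assms by (simp add: add_nonneg_pos)

lemma yv_pos:
  assumes "\<beta> > 0" "\<rho> > 0"
  shows "yv \<beta> \<rho> a b > 0"
proof -
  have "\<bar>a + \<rho> * b\<bar> < sqrt ((a + \<rho> * b)\<^sup>2 + 4 * \<rho> * \<beta>)"
    using assms by (metis add.commute less_add_same_cancel2 mult_pos_pos real_sqrt_abs
        real_sqrt_less_iff zero_less_numeral)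
  then show ?thesis unfolding yv_def by simp
qed

lemma DERIV_yv:
  assumes "(p has_real_derivative p') (at t)" "(q has_real_derivative q') (at t)"
    and "\<beta> > 0" "\<rho> > 0"
  shows "((\<lambda>s. yv \<beta> \<rho> (p s) (q s)) has_real_derivative
      - yv \<beta> \<rho> (p t) (q t) / (yv \<beta> \<rho> (p t) (q t) + lv \<beta> \<rho> (p t) (q t)) * (p' + \<rho> * q')) (at t)"
proof -
  define \<sigma> where "\<sigma> = p t + \<rho> * q t"
  define S where "S = sqrt (\<sigma>\<^sup>2 + 4 * \<rho> * \<beta>)"
  have "S > 0" unfolding S_def using assms by (simp add: add_nonneg_pos)
  have deriv: "((\<lambda>s. yv \<beta> \<rho> (p s) (q s)) has_real_derivative
      (\<sigma> / S * (p' + \<rho> * q') - (p' + \<rho> * q')) / 2) (at t)"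
    unfolding yv_def using assms \<open>S > 0\<close>
    by (auto intro!: derivative_eq_intros simp: S_def \<sigma>_def field_simps)
  have sum: "yv \<beta> \<rho> (p t) (q t) + lv \<beta> \<rho> (p t) (q t) = S"
    unfolding yv_plus_lv S_def \<sigma>_def ..
  have y: "yv \<beta> \<rho> (p t) (q t) = (S - \<sigma>) / 2"
    unfolding yv_def S_def \<sigma>_def ..
  have "- yv \<beta> \<rho> (p t) (q t) / (yv \<beta> \<rho> (p t) (q t) + lv \<beta> \<rho> (p t) (q t)) * (p' + \<rho> * q')
      = (\<sigma> / S * (p' + \<rho> * q') - (p' + \<rho> * q')) / 2"
    unfolding sum unfolding y using \<open>S > 0\<close> by (simp add: field_simps)
  with deriv show ?thesis by (simp only:)
qed

lemma DERIV_yv_along_line: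
  assumes "\<beta> > 0" "\<rho> > 0" "(g has_derivative (\<lambda>h. g' \<bullet> h)) (at x)"
  shows "((\<lambda>t. yv \<beta> \<rho> (g (x + t *\<^sub>R dx)) (v + t * dv)) has_real_derivative
      - yv \<beta> \<rho> (g x) v / (yv \<beta> \<rho> (g x) v + lv \<beta> \<rho> (g x) v) * (g' \<bullet> dx + \<rho> * dv)) (at 0)"
proof -
  have "((\<lambda>t. v + t * dv) has_real_derivative dv) (at 0)"
    by (auto intro!: derivative_eq_intros)
  from DERIV_yv[OF DERIV_along_line[OF assms(3)] this assms(1,2)] show ?thesis
    by simp
qed

lemma DERIV_merit_smooth_part_along_line:
  fixes f :: "real^'n \<Rightarrow> real" and c :: "'m::finite \<Rightarrow> real^'n \<Rightarrow> real"
  assumes "\<beta> > 0" "\<rho> > 0"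
    and "(f has_derivative (\<lambda>h. gfx \<bullet> h)) (at x)"
    and "\<And>i. (c i has_derivative (\<lambda>h. gcx i \<bullet> h)) (at x)"
  shows "((\<lambda>t. \<xi> * \<rho> * f (x + t *\<^sub>R dx)
        - \<xi> * \<rho> * \<beta> * (\<Sum>i\<in>UNIV. ln (yv \<beta> \<rho> (c i (x + t *\<^sub>R dx)) (u $ i + t * du $ i))))
      has_real_derivative \<xi> * linq \<beta> \<rho> gfx (\<lambda>i. c i x) gcx u (dx, du)) (at 0)"
proof -
  define Y where "Y i t = yv \<beta> \<rho> (c i (x + t *\<^sub>R dx)) (u $ i + t * du $ i)" for i t
  define S where "S i = yv \<beta> \<rho> (c i x) (u $ i) + lv \<beta> \<rho> (c i x) (u $ i)" for i
  define s where "s i = gcx i \<bullet> dx + \<rho> * du $ i" for i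
  have ln_Y: "((\<lambda>t. ln (Y i t)) has_real_derivative - s i / S i) (at 0)" for i
  proof -
    have pos: "Y i 0 > 0"
      unfolding Y_def using yv_pos assms(1,2) by simp
    have "(Y i has_real_derivative - Y i 0 / S i * s i) (at 0)"
      unfolding Y_def[abs_def] S_def s_def using DERIV_yv_along_line[OF assms(1,2,4)] by simp
    from DERIV_chain2[OF DERIV_ln[OF pos] this] show ?thesis
      using pos by (simp add: field_simps)
  qed
  have linq_eq: "linq \<beta> \<rho> gfx (\<lambda>i. c i x) gcx u (dx, du)
      = \<rho> * (gfx \<bullet> dx) + \<rho> * \<beta> * (\<Sum>i\<in>UNIV. s i / S i)"
    unfolding linq_def S_def s_def by (simp add: sum_distrib_left)
  have "((\<lambda>t. \<xi> * \<rho> * f (x + t *\<^sub>R dx) - \<xi> * \<rho> * \<beta> * (\<Sum>i\<in>UNIV. ln (Y i t)))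
      has_real_derivative \<xi> * \<rho> * (gfx \<bullet> dx) - \<xi> * \<rho> * \<beta> * (\<Sum>i\<in>UNIV. - s i / S i)) (at 0)"
    by (intro DERIV_diff DERIV_cmult DERIV_sum ln_Y DERIV_along_line assms(3))
  moreover have "\<xi> * \<rho> * (gfx \<bullet> dx) - \<xi> * \<rho> * \<beta> * (\<Sum>i\<in>UNIV. - s i / S i)
      = \<xi> * linq \<beta> \<rho> gfx (\<lambda>i. c i x) gcx u (dx, du)"
    unfolding linq_eq by (simp add: sum_negf algebra_simps)
  ultimately show ?thesis
    unfolding Y_def by simp
qed

lemma has_vector_derivative_residual_along_line:
  fixes c :: "'m::finite \<Rightarrow> real^'n \<Rightarrow> real"
  assumes "\<beta> > 0" "\<rho> > 0" "\<And>i. (c i has_derivative (\<lambda>h. gcx i \<bullet> h)) (at x)"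
  shows "((\<lambda>t. \<chi> i. c i (x + t *\<^sub>R dx) + yv \<beta> \<rho> (c i (x + t *\<^sub>R dx)) (u $ i + t * du $ i))
      has_vector_derivative RTd \<beta> \<rho> (\<lambda>i. c i x) gcx u (dx, du)) (at 0)"
proof -
  have "((\<lambda>t. c i (x + t *\<^sub>R dx) + yv \<beta> \<rho> (c i (x + t *\<^sub>R dx)) (u $ i + t * du $ i))
      has_real_derivative RTd \<beta> \<rho> (\<lambda>i. c i x) gcx u (dx, du) $ i) (at 0)" for i
  proof -
    have weights: "l / (y + l) * a - \<rho> * (y / (y + l)) * b = a + - y / (y + l) * (a + \<rho> * b)"
      if "y + l > 0" for y l a b :: real
      using that by (simp add: divide_simps) (simp add: algebra_simps)
    have "((\<lambda>t. c i (x + t *\<^sub>R dx) + yv \<beta> \<rho> (c i (x + t *\<^sub>R dx)) (u $ i + t * du $ i))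
        has_real_derivative gcx i \<bullet> dx + - yv \<beta> \<rho> (c i x) (u $ i)
          / (yv \<beta> \<rho> (c i x) (u $ i) + lv \<beta> \<rho> (c i x) (u $ i)) * (gcx i \<bullet> dx + \<rho> * du $ i)) (at 0)"
      by (intro DERIV_add DERIV_along_line DERIV_yv_along_line assms)
    then show ?thesis
      unfolding RTd_def Let_def using weights[OF yv_plus_lv_pos[OF assms(1,2)]] by simp
  qed
  then have "((\<lambda>t. \<chi> i. c i (x + t *\<^sub>R dx) + yv \<beta> \<rho> (c i (x + t *\<^sub>R dx)) (u $ i + t * du $ i))
      has_vector_derivative (\<chi> i. RTd \<beta> \<rho> (\<lambda>i. c i x) gcx u (dx, du) $ i)) (at 0)"
    by (rule has_vector_derivative_vec_lambda)
  then show ?thesis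
    by simp
qed

lemma has_dir_deriv_merit:
  fixes f :: "real^'n \<Rightarrow> real" and c :: "'m::finite \<Rightarrow> real^'n \<Rightarrow> real"
  assumes "\<beta> > 0" "\<rho> > 0"
    and "(f has_derivative (\<lambda>h. gfx \<bullet> h)) (at x)"
    and "\<And>i. (c i has_derivative (\<lambda>h. gcx i \<bullet> h)) (at x)"
  shows "has_dir_deriv (merit \<xi> \<beta> \<rho> f c) (x, u) d
      (\<xi> * linq \<beta> \<rho> gfx (\<lambda>i. c i x) gcx u d
        + norm_dir_deriv (rvec \<beta> \<rho> (\<lambda>i. c i x) u) (RTd \<beta> \<rho> (\<lambda>i. c i x) gcx u d))"
proof -
  obtain dx du where d: "d = (dx, du)"
    by fastforce
  define A where "A t = \<xi> * \<rho> * f (x + t *\<^sub>R dx)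
      - \<xi> * \<rho> * \<beta> * (\<Sum>i\<in>UNIV. ln (yv \<beta> \<rho> (c i (x + t *\<^sub>R dx)) (u $ i + t * du $ i)))" for t
  define w where "w t = (\<chi> i. c i (x + t *\<^sub>R dx) + yv \<beta> \<rho> (c i (x + t *\<^sub>R dx)) (u $ i + t * du $ i))"
    for t
  have merit_line: "merit \<xi> \<beta> \<rho> f c ((x, u) + t *\<^sub>R d) = A t + norm (w t)" for t
    unfolding d A_def w_def merit_def by simp
  have "(merit \<xi> \<beta> \<rho> f c ((x, u) + t *\<^sub>R d) - merit \<xi> \<beta> \<rho> f c (x, u)) / t
      = (A t - A 0) / t + (norm (w t) - norm (w 0)) / t" for t
    using merit_line[of t] merit_line[of 0] by (simp add: add_divide_distrib[symmetric])
  moreover have "w 0 = rvec \<beta> \<rho> (\<lambda>i. c i x) u"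
    unfolding w_def rvec_def by simp
  moreover have "((\<lambda>t. (A t - A 0) / t) \<longlongrightarrow> \<xi> * linq \<beta> \<rho> gfx (\<lambda>i. c i x) gcx u d) (at_right 0)"
    unfolding d A_def
    by (intro tendsto_right_quotient_of_real_derivative DERIV_merit_smooth_part_along_line assms)
  moreover have "((\<lambda>t. (norm (w t) - norm (w 0)) / t)
      \<longlongrightarrow> norm_dir_deriv (w 0) (RTd \<beta> \<rho> (\<lambda>i. c i x) gcx u d)) (at_right 0)"
    unfolding d w_def
    by (intro tendsto_norm_right_quotient has_vector_derivative_residual_along_line assms)
  ultimately show ?thesis
    unfolding has_dir_deriv_def by (simp add: tendsto_add)
qed

lemma RTd_zero [simp]: "RTd \<beta> \<rho> ck gck uk 0 = 0"
  unfolding RTd_def by (simp add: vec_eq_iff Let_def)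

lemma qhat_zero [simp]: "qhat \<beta> \<rho> gfk H ck gck uk 0 = 0"
  unfolding qhat_def linq_def quadQ_def by simp

theorem lemma3p2:
  fixes \<beta> \<rho> \<xi> :: real
    and f :: "real^'n \<Rightarrow> real" and gf :: "real^'n \<Rightarrow> real^'n"
    and c :: "'m::finite \<Rightarrow> real^'n \<Rightarrow> real" and gc :: "'m \<Rightarrow> real^'n \<Rightarrow> real^'n"
    and xk :: "real^'n" and uk :: "real^'m" and H :: "real^'n^'n"
    and dc dk :: "(real^'n) \<times> (real^'m)"
  assumes "\<beta> > 0" and "\<rho> > 0" and "\<xi> > 0"
    and f_C1: "\<And>x. (f has_derivative (\<lambda>h. gf x \<bullet> h)) (at x)" "continuous_on UNIV gf"
    and c_C1: "\<And>i x. (c i has_derivative (\<lambda>h. gc i x \<bullet> h)) (at x)" "\<And>i. continuous_on UNIV (gc i)"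
    and H_sym: "transpose H = H"
    and dc_zero: "rvec \<beta> \<rho> (\<lambda>i. c i xk) uk = 0 \<Longrightarrow> dc = 0"
    and dk_feas: "RTd \<beta> \<rho> (\<lambda>i. c i xk) (\<lambda>i. gc i xk) uk dk = RTd \<beta> \<rho> (\<lambda>i. c i xk) (\<lambda>i. gc i xk) uk dc"
    and dk_opt: "\<And>d. RTd \<beta> \<rho> (\<lambda>i. c i xk) (\<lambda>i. gc i xk) uk d = RTd \<beta> \<rho> (\<lambda>i. c i xk) (\<lambda>i. gc i xk) uk dc
        \<Longrightarrow> qhat \<beta> \<rho> (gf xk) H (\<lambda>i. c i xk) (\<lambda>i. gc i xk) uk dk
            \<le> qhat \<beta> \<rho> (gf xk) H (\<lambda>i. c i xk) (\<lambda>i. gc i xk) uk d"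
  shows "\<exists>D. has_dir_deriv (merit \<xi> \<beta> \<rho> f c) (xk, uk) dk D
     \<and> D \<le> \<xi> * linq \<beta> \<rho> (gf xk) (\<lambda>i. c i xk) (\<lambda>i. gc i xk) uk dk
            + norm (rvec \<beta> \<rho> (\<lambda>i. c i xk) uk + RTd \<beta> \<rho> (\<lambda>i. c i xk) (\<lambda>i. gc i xk) uk dk)
            - norm (rvec \<beta> \<rho> (\<lambda>i. c i xk) uk)
     \<and> (rvec \<beta> \<rho> (\<lambda>i. c i xk) uk = 0 \<longrightarrow>
          D \<le> - (1/2) * \<xi> * quadQ \<beta> \<rho> H (\<lambda>i. c i xk) (\<lambda>i. gc i xk) uk dk)"
proof -
  let ?ck = "\<lambda>i. c i xk" and ?gck = "\<lambda>i. gc i xk"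
  let ?r = "rvec \<beta> \<rho> ?ck uk" and ?v = "RTd \<beta> \<rho> ?ck ?gck uk dk"
  let ?L = "linq \<beta> \<rho> (gf xk) ?ck ?gck uk dk" and ?Q = "quadQ \<beta> \<rho> H ?ck ?gck uk dk"
  have "has_dir_deriv (merit \<xi> \<beta> \<rho> f c) (xk, uk) dk (\<xi> * ?L + norm_dir_deriv ?r ?v)"
    using \<open>\<beta> > 0\<close> \<open>\<rho> > 0\<close> f_C1(1) c_C1(1) by (rule has_dir_deriv_merit)
  moreover have "\<xi> * ?L + norm_dir_deriv ?r ?v \<le> \<xi> * ?L + norm (?r + ?v) - norm ?r"
    using norm_dir_deriv_le[of ?r ?v] by simp
  moreover have "\<xi> * ?L + norm_dir_deriv ?r ?v \<le> - (1/2) * \<xi> * ?Q" if "?r = 0"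
  proof -
    have "dc = 0"
      using dc_zero that .
    then have "?v = 0"
      using dk_feas by simp
    have "qhat \<beta> \<rho> (gf xk) H ?ck ?gck uk dk \<le> qhat \<beta> \<rho> (gf xk) H ?ck ?gck uk 0"
      using \<open>dc = 0\<close> by (intro dk_opt) simp
    then have "?L + ?Q / 2 \<le> 0"
      unfolding qhat_zero unfolding qhat_def .
    then have "\<xi> * (?L + ?Q / 2) \<le> 0"
      using \<open>\<xi> > 0\<close> by (simp add: mult_nonneg_nonpos)
    then have "\<xi> * ?L \<le> - (1/2) * \<xi> * ?Q"
      by (simp add: algebra_simps)
    then show ?thesis
      using \<open>?r = 0\<close> \<open>?v = 0\<close> by (simp add: norm_dir_deriv_def)
  qed
  ultimately show ?thesis
    by blast
qed

end
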